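(* Let $x_0\in\mathbb{R}^d\setminus\{0\}$ be fixed and let $\Phi:\mathbb{R}^d\to\mathbb{R}$ be a random ReLU network of width $N$ with $L$ hidden layers as described in the context. Then almost surely $\Phi$ is differentiable at $x_0$ with $$(\nabla\Phi(x_0))^T=W^{(L)}D^{(L-1)}(x_0)W^{(L-1)}\cdots D^{(0)}(x_0)W^{(0)}.$$
   Context: The network is $\Phi = V^{(L)}\circ\mathrm{ReLU}\circ\cdots\circ\mathrm{ReLU}\circ V^{(0)}$, $V^{(\ell)}(x)=W^{(\ell)}x+b^{(\ell)}$, $\mathrm{ReLU}(t)=\max\{0,t\}$ componentwise, with $W^{(0)}\in\mathbb{R}^{N\times d}$, $W^{(\ell)}\in\mathbb{R}^{N\times N}$ ($1\le\ell\le L-1$), $W^{(L)}\in\mathbb{R}^{1\times N}$, $b^{(\ell)}\in\mathbb{R}^N$ ($\ell<L$), $b^{(L)}\in\mathbb{R}$; entries of $W^{(\ell)}$, $\ell<L$, i.i.d. $\mathcal{N}(0,2/N)$; entries of $W^{(L)}$ i.i.d. $\mathcal{N}(0,1)$; $b^{(\ell)}_i\sim\mathcal{D}^{(\ell)}_i$ for arbitrary probability distributions on $\mathbb{R}$; all jointly independent. For $v\in\mathbb{R}^N$, $\Delta(v)$ is diagonal with entries $\mathbb{1}_{v_i>0}$. With $x^{(0)}=x_0$, recursively $D^{(\ell)}(x_0)=\Delta(W^{(\ell)}x^{(\ell)}+b^{(\ell)})$ and $x^{(\ell+1)}=\mathrm{ReLU}(W^{(\ell)}x^{(\ell)}+b^{(\ell)})$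 for $0\le\ell<L$. *)

theory Defs
  imports "HOL-Probability.Probability"
begin

text \<open>Input vectors live in real^'d
 (d = CARD('d)); hidden layers have width N (indices 0..N-1); there are L
 hidden layers. A sample point omega assigns a real to each parameter:
 W0 i j = entry (i,j) of W^(0); W l i j = entry (i,j) of W^(l), 1 <= l <= L-1;
 WL j = entry j of W^(L); B l i = entry i of b^(l), l < L; BL = b^(L).\<close>

datatype 'd prm = W0 nat 'd | W nat nat nat | WL nat | B nat nat | BL

definition prm_index :: "nat \<Rightarrow> nat \<Rightarrow> 'd prm set" where
  "prm_index N L =
     {W0 i j | i j. i < N}
   \<union> {W l i j | l i j. 1 \<le> l \<and> l < L \<and> i < N \<and> j < N}
   \<union> {WL j | j. j < N}
   \<union> {B l i | l i. l < L \<and> i < N}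
   \<union> {BL}"

text \<open>Distribution of each parameter: weights of layers l < L are N(0, 2/N)
 (standard deviation sqrt(2/N)), weights of the output layer are N(0,1),
 bias b^(l)_i has the arbitrary distribution Dist l i, and b^(L) has DistL.\<close>

fun prm_dist :: "nat \<Rightarrow> (nat \<Rightarrow> nat \<Rightarrow> real measure) \<Rightarrow> real measure \<Rightarrow> 'd prm \<Rightarrow> real measure" where
  "prm_dist N Dist DistL (W0 i j) = density lborel (normal_density 0 (sqrt (2 / real N)))"
| "prm_dist N Dist DistL (W l i j) = density lborel (normal_density 0 (sqrt (2 / real N)))"
| "prm_dist N Dist DistL (WL j) = density lborel (normal_density 0 1)"
| "prm_dist N Dist DistL (B l i) = Dist l i"
| "prm_dist N Dist DistL BL = DistL"

definition param_space :: "nat \<Rightarrow> nat \<Rightarrow> (nat \<Rightarrow> nat \<Rightarrow> real measure) \<Rightarrow> real measure \<Rightarrow> ('d::finite prm \<Rightarrow> real) measure" where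
  "param_space N L Dist DistL = PiM (prm_index N L) (prm_dist N Dist DistL)"

fun preact :: "('d::finite prm \<Rightarrow> real) \<Rightarrow> nat \<Rightarrow> real^'d \<Rightarrow> nat \<Rightarrow> nat \<Rightarrow> real" where
  "preact w N x 0 i = (\<Sum>j\<in>UNIV. w (W0 i j) * x $ j) + w (B 0 i)"
| "preact w N x (Suc l) i =
     (\<Sum>j<N. w (W (Suc l) i j) * max 0 (preact w N x l j)) + w (B (Suc l) i)"

text \<open>x^(l+1)_i = ReLU(preact l)_i.\<close>
definition hidden :: "('d::finite prm \<Rightarrow> real) \<Rightarrow> nat \<Rightarrow> real^'d \<Rightarrow> nat \<Rightarrow> nat \<Rightarrow> real" where
  "hidden w N x l i = max 0 (preact w N x l i)"

definition relu_net :: "('d::finite prm \<Rightarrow> real) \<Rightarrow> nat \<Rightarrow> nat \<Rightarrow> real^'d \<Rightarrow> real" where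
  "relu_net w N L x = (\<Sum>j<N. w (WL j) * hidden w N x (L - 1) j) + w BL"

text \<open>Diagonal entries of D^(l)(x0) = Delta(W^(l) x^(l) + b^(l)).\<close>
definition act_pattern :: "('d::finite prm \<Rightarrow> real) \<Rightarrow> nat \<Rightarrow> real^'d \<Rightarrow> nat \<Rightarrow> nat \<Rightarrow> real" where
  "act_pattern w N x0 l i = (if preact w N x0 l i > 0 then 1 else 0)"

text \<open>chain w N x0 l h = D^(l)(x0) W^(l) ... D^(0)(x0) W^(0) h.\<close>
fun chain :: "('d::finite prm \<Rightarrow> real) \<Rightarrow> nat \<Rightarrow> real^'d \<Rightarrow> nat \<Rightarrow> real^'d \<Rightarrow> nat \<Rightarrow> real" where
  "chain w N x0 0 h i = act_pattern w N x0 0 i * (\<Sum>j\<in>UNIV. w (W0 i j) * h $ j)"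
| "chain w N x0 (Suc l) h i =
     act_pattern w N x0 (Suc l) i * (\<Sum>j<N. w (W (Suc l) i j) * chain w N x0 l h j)"

text \<open>The linear map h |-> W^(L) D^(L-1)(x0) W^(L-1) ... D^(0)(x0) W^(0) h.\<close>
definition grad_product :: "('d::finite prm \<Rightarrow> real) \<Rightarrow> nat \<Rightarrow> nat \<Rightarrow> real^'d \<Rightarrow> real^'d \<Rightarrow> real" where
  "grad_product w N L x0 h = (\<Sum>j<N. w (WL j) * chain w N x0 (L - 1) h j)"

end

theory Submission
  imports Defs
begin

text \<open>
Near x0 the network is affine as soon as every neuron's activation pattern is locally constant,
and then its derivative is the product of weight matrices and activation patterns.  A neuron's
pattern is locally constant if its preactivation at x0 is nonzero, or if its whole input layer is
inactive at x0 (its preactivation is then locally constant as well).  The remaining case is null: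
a neuron of layer l+1 fed by an active neuron j of layer l has preactivation
w * x^(l+1)_j + c with w = W^(l+1)_ij, x^(l+1)_j > 0 and c not depending on w; as w is Gaussian,
hence atomless, and independent of the rest, Fubini shows that this vanishes with probability 0.
In the input layer the coefficient is a nonzero coordinate of x0.
\<close>

lemma eventually_relu_linearization:
  fixes p :: "'a::t2_space \<Rightarrow> real"
  assumes cont: "isCont p x0"
    and nondeg: "p x0 \<noteq> 0 \<or> (\<forall>\<^sub>F x in nhds x0. p x = p x0)"
  shows "\<forall>\<^sub>F x in nhds x0. max 0 (p x) = max 0 (p x0) + (if p x0 > 0 then 1 else 0) * (p x - p x0)"
proof -
  have lim: "(p \<longlongrightarrow> p x0) (nhds x0)"
    using cont by (simp add: isCont_def tendsto_at_iff_tendsto_nhds)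
  consider "p x0 > 0" | "p x0 < 0" | "\<forall>\<^sub>F x in nhds x0. p x = p x0"
    using nondeg by linarith
  then show ?thesis
  proof cases
    case 1
    from order_tendstoD(1)[OF lim 1] show ?thesis by (rule eventually_mono) (simp add: 1)
  next
    case 2
    from order_tendstoD(2)[OF lim 2] show ?thesis by (rule eventually_mono) (use 2 in auto)
  qed (auto elim: eventually_mono)
qed

lemma borel_measurable_component_PiM:
  fixes M :: "'i \<Rightarrow> 'a::topological_space measure"
  assumes "sets (M i) = sets borel"
  shows "(\<lambda>w. w i) \<in> borel_measurable (PiM I M)"
proof (cases "i \<in> I")
  case True
  show ?thesis
    using measurable_component_singleton[OF True, of M] by (simp add: measurable_cong_sets[OF refl assms])
next
  case False
  have "(\<lambda>w. w i) \<in> borel_measurable (PiM I M) \<longleftrightarrow> (\<lambda>_. undefined :: 'a) \<in> borel_measurable (PiM I M)"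
  proof (rule measurable_cong)
    fix w assume "w \<in> space (PiM I M)"
    then have "w \<in> PiE I (\<lambda>i. space (M i))"
      by (simp only: space_PiM)
    then show "w i = undefined"
      using False by (rule PiE_arb)
  qed
  then show ?thesis
    by simp
qed

lemma AE_PiM_affine_in_coordinate_neq_0:
  fixes M :: "'i \<Rightarrow> real measure" and g c :: "('i \<Rightarrow> real) \<Rightarrow> real"
  assumes "\<And>i. sigma_finite_measure (M i)" and "finite I" and "k \<in> I"
    and atomless: "\<And>a. emeasure (M k) {a} = 0" and sets_Mk: "sets (M k) = sets borel"
    and [measurable]: "g \<in> borel_measurable (PiM I M)" "c \<in> borel_measurable (PiM I M)"
    and g_indep: "\<And>w t. g (w(k := t)) = g w" and c_indep: "\<And>w t. c (w(k := t)) = c w"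
  shows "AE w in PiM I M. g w \<noteq> 0 \<longrightarrow> w k * g w + c w \<noteq> 0"
proof -
  interpret product_sigma_finite M
    by (simp add: product_sigma_finite_def assms(1))
  have [measurable]: "(\<lambda>w. w k) \<in> borel_measurable (PiM I M)"
    using sets_Mk by (rule borel_measurable_component_PiM)
  define E where "E = {w \<in> space (PiM I M). g w \<noteq> 0 \<and> w k * g w + c w = 0}"
  have [measurable]: "E \<in> sets (PiM I M)"
    unfolding E_def by measurable
  have I: "I = insert k (I - {k})"
    using \<open>k \<in> I\<close> by auto
  \<comment> \<open>Fubini over coordinate k: each line in direction k meets E in at most the point -c/g,
    which is null for M k.\<close>
  have "emeasure (PiM I M) E = (\<integral>\<^sup>+ w. indicator E w \<partial>PiM I M)"
    by simp
  also have "\<dots> = (\<integral>\<^sup>+ x. (\<integral>\<^sup>+ y. indicator E (x(k := y)) \<partial>M k) \<partial>PiM (I - {k}) M)"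
    by (subst I, rule product_nn_integral_insert) (use \<open>finite I\<close> I in auto)
  also have "\<dots> \<le> (\<integral>\<^sup>+ x. (\<integral>\<^sup>+ y. indicator {- c x / g x} y \<partial>M k) \<partial>PiM (I - {k}) M)"
  proof (intro nn_integral_mono)
    fix x y
    show "indicator E (x(k := y)) \<le> (indicator {- c x / g x} y :: ennreal)"
    proof (cases "x(k := y) \<in> E")
      case True
      then have "g x \<noteq> 0" "y * g x + c x = 0"
        using g_indep c_indep by (auto simp: E_def)
      then have "y = - c x / g x"
        by (simp add: field_simps)
      then show ?thesis
        using True by simp
    qed simp
  qed
  also have "\<dots> = 0"
    using atomless sets_Mk by (simp add: nn_integral_indicator)
  finally have "E \<in> null_sets (PiM I M)"
    by (simp add: null_sets_def)
  then show ?thesis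
    by (rule AE_I') (auto simp: E_def)
qed

lemma emeasure_density_lborel_singleton:
  assumes "f \<in> borel_measurable borel"
  shows "emeasure (density lborel f) {a} = 0"
proof -
  have "{a} \<in> null_sets lborel"
    by (intro null_setsI) auto
  then show ?thesis
    using assms by (simp add: emeasure_density nn_integral_null_set)
qed

lemma isCont_preact: "isCont (\<lambda>x. preact w N x l i) x"
  by (induction l arbitrary: i) (auto intro!: continuous_intros)

lemma bounded_linear_chain: "bounded_linear (\<lambda>h. chain w N x0 l h i)"
  by (induction l arbitrary: i) (auto intro!: bounded_linear_intros)

lemma bounded_linear_grad_product: "bounded_linear (grad_product w N L x0)"
  unfolding grad_product_def by (auto intro!: bounded_linear_intros bounded_linear_chain)

text \<open>preact_lin w N x0 l h i = (W^(l) D^(l-1)(x0) W^(l-1) ... D^(0)(x0) W^(0) h)_i\<close>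

fun preact_lin :: "('d::finite prm \<Rightarrow> real) \<Rightarrow> nat \<Rightarrow> real^'d \<Rightarrow> nat \<Rightarrow> real^'d \<Rightarrow> nat \<Rightarrow> real" where
  "preact_lin w N x0 0 h i = (\<Sum>j\<in>UNIV. w (W0 i j) * h $ j)"
| "preact_lin w N x0 (Suc l) h i = (\<Sum>j<N. w (W (Suc l) i j) * chain w N x0 l h j)"

lemma chain_eq_act_pattern_preact_lin:
  "chain w N x0 l h i = act_pattern w N x0 l i * preact_lin w N x0 l h i"
  by (cases l) simp_all

lemma preact_Suc_hidden:
  "preact w N x (Suc l) i = (\<Sum>j<N. w (W (Suc l) i j) * hidden w N x l j) + w (B (Suc l) i)"
  by (simp add: hidden_def)

lemma eventually_hidden_linearization_step:
  assumes preact: "\<forall>\<^sub>F x in nhds x0. \<forall>i<N.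
      preact w N x l i = preact w N x0 l i + preact_lin w N x0 l (x - x0) i"
    and nondeg: "\<forall>i<N. preact w N x0 l i \<noteq> 0 \<or> (\<forall>h. preact_lin w N x0 l h i = 0)"
  shows "\<forall>\<^sub>F x in nhds x0. \<forall>i<N.
      hidden w N x l i = hidden w N x0 l i + chain w N x0 l (x - x0) i"
proof -
  have "\<forall>\<^sub>F x in nhds x0. hidden w N x l i = hidden w N x0 l i + chain w N x0 l (x - x0) i"
    if i: "i < N" for i
  proof -
    let ?p = "\<lambda>x. preact w N x l i"
    have diff: "\<forall>\<^sub>F x in nhds x0. ?p x - ?p x0 = preact_lin w N x0 l (x - x0) i"
      using preact by (rule eventually_mono) (simp add: i)
    have "?p x0 \<noteq> 0 \<or> (\<forall>\<^sub>F x in nhds x0. ?p x = ?p x0)"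
    proof (cases "?p x0 = 0")
      case True
      then have "\<forall>h. preact_lin w N x0 l h i = 0"
        using nondeg i by blast
      with diff show ?thesis
        by (auto elim: eventually_mono)
    qed simp
    with isCont_preact have "\<forall>\<^sub>F x in nhds x0.
        max 0 (?p x) = max 0 (?p x0) + (if ?p x0 > 0 then 1 else 0) * (?p x - ?p x0)"
      by (rule eventually_relu_linearization)
    with diff show ?thesis
    proof eventually_elim
      case (elim x)
      then show ?case
        by (simp only: hidden_def chain_eq_act_pattern_preact_lin act_pattern_def)
    qed
  qed
  then have "\<forall>\<^sub>F x in nhds x0. \<forall>i\<in>{..<N}.
      hidden w N x l i = hidden w N x0 l i + chain w N x0 l (x - x0) i"
    by (simp add: eventually_ball_finite)
  then show ?thesis
    by (rule eventually_mono) simp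
qed

text \<open>A zero preactivation at x0 is harmless if the whole input layer is inactive at x0:
  the preactivation is then constant near x0.\<close>

fun nondegenerate_neuron :: "('d::finite prm \<Rightarrow> real) \<Rightarrow> nat \<Rightarrow> real^'d \<Rightarrow> nat \<Rightarrow> nat \<Rightarrow> bool" where
  "nondegenerate_neuron w N x0 0 i \<longleftrightarrow> preact w N x0 0 i \<noteq> 0"
| "nondegenerate_neuron w N x0 (Suc l) i \<longleftrightarrow>
     preact w N x0 (Suc l) i \<noteq> 0 \<or> (\<forall>j<N. preact w N x0 l j \<le> 0)"

lemma preact_lin_Suc_eq_0_if_inactive:
  assumes "\<forall>j<N. preact w N x0 l j \<le> 0"
  shows "preact_lin w N x0 (Suc l) h i = 0"
proof -
  have "chain w N x0 l h j = 0" if "j < N" for j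
    using assms that by (auto simp: chain_eq_act_pattern_preact_lin act_pattern_def)
  then show ?thesis
    by simp
qed

lemma eventually_hidden_linearization:
  assumes "\<forall>l'\<le>l. \<forall>i<N. nondegenerate_neuron w N x0 l' i"
  shows "\<forall>\<^sub>F x in nhds x0. \<forall>i<N.
      hidden w N x l i = hidden w N x0 l i + chain w N x0 l (x - x0) i"
  using assms
proof (induction l)
  case 0
  show ?case
  proof (rule eventually_hidden_linearization_step)
    show "\<forall>\<^sub>F x in nhds x0. \<forall>i<N.
        preact w N x 0 i = preact w N x0 0 i + preact_lin w N x0 0 (x - x0) i"
      by (simp add: right_diff_distrib sum_subtractf)
    show "\<forall>i<N. preact w N x0 0 i \<noteq> 0 \<or> (\<forall>h. preact_lin w N x0 0 h i = 0)"
      using "0.prems" by simp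
  qed
next
  case (Suc m)
  have "\<forall>l'\<le>m. \<forall>i<N. nondegenerate_neuron w N x0 l' i"
    using Suc.prems by simp
  then have hidden: "\<forall>\<^sub>F x in nhds x0. \<forall>j<N.
      hidden w N x m j = hidden w N x0 m j + chain w N x0 m (x - x0) j"
    by (rule Suc.IH)
  show ?case
  proof (rule eventually_hidden_linearization_step)
    from hidden show "\<forall>\<^sub>F x in nhds x0. \<forall>i<N.
        preact w N x (Suc m) i = preact w N x0 (Suc m) i + preact_lin w N x0 (Suc m) (x - x0) i"
    proof (rule eventually_mono, intro allI impI)
      fix x i
      assume "\<forall>j<N. hidden w N x m j = hidden w N x0 m j + chain w N x0 m (x - x0) j"
      then have "(\<Sum>j<N. w (W (Suc m) i j) * hidden w N x m j) =
          (\<Sum>j<N. w (W (Suc m) i j) * hidden w N x0 m j) + preact_lin w N x0 (Suc m) (x - x0) i"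
        by (simp add: distrib_left sum.distrib)
      then show "preact w N x (Suc m) i = preact w N x0 (Suc m) i + preact_lin w N x0 (Suc m) (x - x0) i"
        unfolding preact_Suc_hidden by linarith
    qed
    show "\<forall>i<N. preact w N x0 (Suc m) i \<noteq> 0 \<or> (\<forall>h. preact_lin w N x0 (Suc m) h i = 0)"
    proof (intro allI impI)
      fix i assume "i < N"
      then have "nondegenerate_neuron w N x0 (Suc m) i"
        using Suc.prems by blast
      then show "preact w N x0 (Suc m) i \<noteq> 0 \<or> (\<forall>h. preact_lin w N x0 (Suc m) h i = 0)"
        using preact_lin_Suc_eq_0_if_inactive by auto
    qed
  qed
qed

lemma relu_net_has_derivative_if_nondegenerate:
  assumes "L \<ge> 1" and "\<forall>l<L. \<forall>i<N. nondegenerate_neuron w N x0 l i"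
  shows "((\<lambda>x. relu_net w N L x) has_derivative grad_product w N L x0) (at x0)"
proof -
  have "\<forall>l'\<le>L - 1. \<forall>i<N. nondegenerate_neuron w N x0 l' i"
    using assms by auto
  then have "\<forall>\<^sub>F x in nhds x0. \<forall>i<N.
      hidden w N x (L - 1) i = hidden w N x0 (L - 1) i + chain w N x0 (L - 1) (x - x0) i"
    by (rule eventually_hidden_linearization)
  then have "\<forall>\<^sub>F x in nhds x0. relu_net w N L x0 + grad_product w N L x0 (x - x0) = relu_net w N L x"
    by (rule eventually_mono) (simp add: relu_net_def grad_product_def distrib_left sum.distrib)
  then have locally_affine: "\<forall>\<^sub>F x in at x0.
      relu_net w N L x0 + grad_product w N L x0 (x - x0) = relu_net w N L x"
    by (simp add: eventually_at_filter eventually_mono)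
  have "((\<lambda>x. relu_net w N L x0 + grad_product w N L x0 (x - x0))
      has_derivative (\<lambda>h. 0 + grad_product w N L x0 (h - 0))) (at x0)"
    by (intro derivative_intros bounded_linear.has_derivative[OF bounded_linear_grad_product])
  then have "((\<lambda>x. relu_net w N L x0 + grad_product w N L x0 (x - x0))
      has_derivative grad_product w N L x0) (at x0)"
    by simp
  then show ?thesis
    by (rule has_derivative_transform_eventually[OF _ locally_affine])
      (simp_all add: linear_0[OF bounded_linear.linear, OF bounded_linear_grad_product])
qed

lemma finite_prm_index: "finite (prm_index N L :: 'd::finite prm set)"
proof -
  have "prm_index N L \<subseteq> (\<lambda>(i, j). W0 i j) ` ({..<N} \<times> UNIV)
      \<union> (\<lambda>(l, i, j). W l i j) ` ({..<L} \<times> {..<N} \<times> {..<N})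
      \<union> WL ` {..<N} \<union> (\<lambda>(l, i). B l i) ` ({..<L} \<times> {..<N}) \<union> {BL}"
    unfolding prm_index_def by (fastforce simp: image_iff)
  then show ?thesis
    by (rule finite_subset) auto
qed

lemma preact_fun_upd_later_weight:
  "m < l \<Longrightarrow> preact (w(W l i j := t)) N x m i' = preact w N x m i'"
  by (induction m arbitrary: i') simp_all

locale random_relu_net =
  fixes N L :: nat and Dist :: "nat \<Rightarrow> nat \<Rightarrow> real measure" and DistL :: "real measure"
  assumes width_pos: "N \<ge> 1"
    and prob_space_Dist: "\<And>l i. prob_space (Dist l i)"
    and sets_Dist: "\<And>l i. sets (Dist l i) = sets borel"
    and prob_space_DistL: "prob_space DistL"
    and sets_DistL: "sets DistL = sets borel"
begin

lemma sigma_finite_prm_dist: "sigma_finite_measure (prm_dist N Dist DistL p)"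
  using width_pos
  by (cases p) (auto intro!: prob_space_imp_sigma_finite prob_space_normal_density
      prob_space_Dist prob_space_DistL)

lemma borel_measurable_param [measurable]:
  "(\<lambda>w. w p) \<in> borel_measurable (param_space N L Dist DistL :: ('d::finite prm \<Rightarrow> real) measure)"
  unfolding param_space_def
  by (rule borel_measurable_component_PiM) (cases p; simp add: sets_Dist sets_DistL)

lemma borel_measurable_preact [measurable]:
  "(\<lambda>w. preact w N' x l i) \<in> borel_measurable (param_space N L Dist DistL :: ('d::finite prm \<Rightarrow> real) measure)"
  by (induction l arbitrary: i) simp_all

lemma AE_affine_in_weight_neq_0:
  fixes g c :: "('d::finite prm \<Rightarrow> real) \<Rightarrow> real"
  assumes "k \<in> prm_index N L" and "prm_dist N Dist DistL k = density lborel (normal_density 0 \<sigma>)"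
    and "g \<in> borel_measurable (param_space N L Dist DistL)"
    and "c \<in> borel_measurable (param_space N L Dist DistL)"
    and "\<And>w t. g (w(k := t)) = g w" and "\<And>w t. c (w(k := t)) = c w"
  shows "AE w in param_space N L Dist DistL. g w \<noteq> 0 \<longrightarrow> w k * g w + c w \<noteq> 0"
  using assms unfolding param_space_def
  by (intro AE_PiM_affine_in_coordinate_neq_0 sigma_finite_prm_dist finite_prm_index)
    (simp_all add: emeasure_density_lborel_singleton)

lemma AE_preact_input_layer_neq_0:
  assumes "x0 \<noteq> 0" and "i < N"
  shows "AE w in param_space N L Dist DistL. preact w N x0 0 i \<noteq> 0"
proof -
  obtain j0 where j0: "x0 $ j0 \<noteq> 0"
    using assms(1) by (metis vec_eq_iff zero_index)
  let ?c = "\<lambda>w. (\<Sum>j\<in>UNIV - {j0}. w (W0 i j) * x0 $ j) + w (B 0 i)"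
  have "AE w in param_space N L Dist DistL. x0 $ j0 \<noteq> 0 \<longrightarrow> w (W0 i j0) * x0 $ j0 + ?c w \<noteq> 0"
    by (rule AE_affine_in_weight_neq_0) (auto simp: prm_index_def assms(2) intro!: sum.cong)
  then show ?thesis
    by (rule eventually_mono) (simp add: j0 sum.remove[of UNIV j0] add.assoc)
qed

lemma AE_preact_neq_0_if_input_active:
  assumes "Suc m < L" and "i < N" and "j0 < N"
  shows "AE w in param_space N L Dist DistL.
    0 < preact w N x0 m j0 \<longrightarrow> preact w N x0 (Suc m) i \<noteq> 0"
proof -
  let ?k = "W (Suc m) i j0"
  let ?c = "\<lambda>w. (\<Sum>j\<in>{..<N} - {j0}. w (W (Suc m) i j) * hidden w N x0 m j) + w (B (Suc m) i)"
  have "AE w in param_space N L Dist DistL.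
      hidden w N x0 m j0 \<noteq> 0 \<longrightarrow> w ?k * hidden w N x0 m j0 + ?c w \<noteq> 0"
  proof (rule AE_affine_in_weight_neq_0)
    show "?k \<in> prm_index N L"
      using assms by (simp add: prm_index_def)
    show "(\<lambda>w. hidden w N x0 m j0) \<in> borel_measurable (param_space N L Dist DistL)"
      "?c \<in> borel_measurable (param_space N L Dist DistL)"
      unfolding hidden_def by measurable
    show "hidden (w(?k := t)) N x0 m j0 = hidden w N x0 m j0"
      "?c (w(?k := t)) = ?c w" for w t
      by (auto simp: hidden_def preact_fun_upd_later_weight intro!: sum.cong)
  qed simp
  then show ?thesis
  proof (rule eventually_mono)
    fix w
    assume "hidden w N x0 m j0 \<noteq> 0 \<longrightarrow> w ?k * hidden w N x0 m j0 + ?c w \<noteq> 0"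
    then show "0 < preact w N x0 m j0 \<longrightarrow> preact w N x0 (Suc m) i \<noteq> 0"
      using assms(3) by (auto simp: sum.remove[of "{..<N}" j0] add.assoc hidden_def)
  qed
qed

lemma AE_nondegenerate_neurons:
  assumes "x0 \<noteq> 0"
  shows "AE w in param_space N L Dist DistL. \<forall>l<L. \<forall>i<N. nondegenerate_neuron w N x0 l i"
proof -
  have "AE w in param_space N L Dist DistL. nondegenerate_neuron w N x0 l i"
    if "l < L" and "i < N" for l i
  proof (cases l)
    case 0
    then show ?thesis
      using AE_preact_input_layer_neq_0[OF assms \<open>i < N\<close>] by simp
  next
    case (Suc m)
    have "AE w in param_space N L Dist DistL.
        \<forall>j\<in>{..<N}. 0 < preact w N x0 m j \<longrightarrow> preact w N x0 (Suc m) i \<noteq> 0"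
      using that Suc by (intro AE_finite_allI AE_preact_neq_0_if_input_active) simp_all
    then show ?thesis
      by (rule eventually_mono) (auto simp: Suc not_less)
  qed
  then have "AE w in param_space N L Dist DistL.
      \<forall>l\<in>{..<L}. \<forall>i\<in>{..<N}. nondegenerate_neuron w N x0 l i"
    by (intro AE_finite_allI) simp_all
  then show ?thesis
    by (rule eventually_mono) simp
qed

end

theorem theoremE1:
  fixes x0 :: "real^'d::finite"
    and N L :: nat
    and Dist :: "nat \<Rightarrow> nat \<Rightarrow> real measure"
    and DistL :: "real measure"
  assumes "N \<ge> 1" and "L \<ge> 1"
    and "x0 \<noteq> 0"
    and "\<And>l i. prob_space (Dist l i)"
    and "\<And>l i. sets (Dist l i) = sets borel"
    and "prob_space DistL" and "sets DistL = sets borel"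
  shows "AE w in (param_space N L Dist DistL :: ('d prm \<Rightarrow> real) measure).
           ((\<lambda>x. relu_net w N L x) has_derivative grad_product w N L x0) (at x0)"
proof -
  interpret random_relu_net N L Dist DistL
    using assms by (simp add: random_relu_net_def)
  show ?thesis
    using AE_nondegenerate_neurons[OF \<open>x0 \<noteq> 0\<close>]
    by (rule eventually_mono) (rule relu_net_has_derivative_if_nondegenerate[OF \<open>L \<ge> 1\<close>])
qed

end
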